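(* Let $G=(V,E)$ be a finite directed graph, $e\in E$, and $\alpha,\beta\in\{+,-\}$. Then (i) $\mathbb{E}[R^\alpha(e_* )]=\bar R^\alpha(e_* )$ and $\mathbb{E}[R^\beta(e^* )]=\bar R^\beta(e^* )$; (ii) $\mathbb{E}[R^\alpha(e_* )R^\beta(e^* )]=\bar R^\alpha(e_* )\bar R^\beta(e^* )$.
   Context: For a directed graph $G=(V,E)$, $e_*$ and $e^*$ denote the source and target of edge $e$, $D^+(v)$ and $D^-(v)$ the out- and in-degree of $v$. For a finite sequence $(x_i)_{1\le i\le n}$ of reals, the rank is $R(x_j)=|\{i: x_i\ge x_j\}|$ and the average rank is $\bar R(x_j)=|\{i:x_i>x_j\}|+\frac{|\{i:x_i=x_j\}|+1}{2}$. Let $(U_f)_{f\in E}$ and $(W_f)_{f\in E}$ be i.i.d. copies of independent uniform random variables $U$ and $W$ on $(0,1)$. Define $R^\alpha(e_* )$ as the rank $R$ of $D^\alpha(e_* )+U_e$ within the sequence $(D^\alpha(f_* )+U_f)_{f\in E}$, and $R^\beta(e^* )$ as the rank of $D^\beta(e^* )+W_e$ within $(D^\beta(f^* )+W_f)_{f\in E}$. Define $\bar R^\alpha(e_* )$ as the average rank of $D^\alpha(e_* )$ within $(D^\alpha(f_* ))_{f\in E}$ and $\bar R^\beta(e^* )$ as the average rank of $D^\beta(e^* )$ within $(D^\beta(f^* ))_{f\in E}$. *)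

theory Defs
  imports "HOL-Probability.Probability"
begin

text \<open>Directions: Out corresponds to alpha = +, i.e. out-degree D^+; In to alpha = -, in-degree D^-.\<close>
datatype dir = Out | In

definition deg :: "'e set \<Rightarrow> ('e \<Rightarrow> 'v) \<Rightarrow> ('e \<Rightarrow> 'v) \<Rightarrow> dir \<Rightarrow> 'v \<Rightarrow> nat" where
  "deg E src tgt d v = (case d of
      Out \<Rightarrow> card {f \<in> E. src f = v}
    | In \<Rightarrow> card {f \<in> E. tgt f = v})"

definition rank :: "'e set \<Rightarrow> ('e \<Rightarrow> real) \<Rightarrow> 'e \<Rightarrow> real" where
  "rank A x j = real (card {i \<in> A. x i \<ge> x j})"

definition avg_rank :: "'e set \<Rightarrow> ('e \<Rightarrow> real) \<Rightarrow> 'e \<Rightarrow> real" where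
  "avg_rank A x j = real (card {i \<in> A. x i > x j}) + (real (card {i \<in> A. x i = x j}) + 1) / 2"

definition unif_family :: "'e set \<Rightarrow> ('e \<Rightarrow> real) measure" where
  "unif_family E = PiM E (\<lambda>_. uniform_measure lborel {0<..<1::real})"

end

theory Submission
  imports Defs
begin

text \<open>
  Write the rank as \<open>R(x\<^sub>e) = \<Sum>\<^sub>f [x\<^sub>e \<le> x\<^sub>f]\<close>. For \<open>f \<noteq> e\<close> the perturbed values are
  \<open>D(f) + U\<^sub>f\<close> with \<open>U\<^sub>f \<in> (0,1)\<close>, so the indicator is almost surely constant when the integer
  parts \<open>D(e)\<close>, \<open>D(f)\<close> differ, and equals \<open>[U\<^sub>e \<le> U\<^sub>f]\<close>, of probability \<open>1/2\<close>, when they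
  agree: \<open>[U\<^sub>e \<le> U\<^sub>f] + [U\<^sub>f \<le> U\<^sub>e] = 1 + [U\<^sub>e = U\<^sub>f]\<close>, the two terms have equal expectation
  by exchangeability, and ties have probability zero. Summing over \<open>f\<close> yields the average rank.
  For (ii), \<open>R\<^sup>\<alpha>(e\<^sub>*)\<close> depends only on \<open>U\<close> and \<open>R\<^sup>\<beta>(e\<^sup>*)\<close> only on the independent \<open>W\<close>, so the
  expectation of the product factors.
\<close>

abbreviation unif01 :: "real measure" where
  "unif01 \<equiv> uniform_measure lborel {0<..<1}"

lemma prob_space_unif01: "prob_space unif01"
  by (rule prob_space_uniform_measure) auto

lemma AE_unif01: "AE x in unif01. 0 < x \<and> x < 1"
  by (rule AE_uniform_measureI) auto

lemma measure_unif01_singleton: "measure unif01 {c} = 0"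
proof -
  have "measure lborel ({0<..<1} \<inter> {c}) = 0"
    by (cases "c \<in> {0<..<1}") (auto simp: Int_absorb1 Int_absorb2)
  then show ?thesis
    by (subst measure_uniform_measure) auto
qed

lemma measurable_pair_measure_borel_sets:
  "sets N = sets borel \<Longrightarrow> measurable (N \<Otimes>\<^sub>M N) K = measurable (borel \<Otimes>\<^sub>M borel) K"
  by (intro measurable_cong_sets sets_pair_measure_cong) auto

lemma measurable_pair_unif01: "measurable (unif01 \<Otimes>\<^sub>M unif01) K = measurable (borel \<Otimes>\<^sub>M borel) K"
  by (rule measurable_pair_measure_borel_sets) simp

lemma prob_space_unif_family: "prob_space (unif_family E)"
  unfolding unif_family_def by (intro prob_space_PiM prob_space_unif01)

lemma AE_unif_family: "finite E \<Longrightarrow> AE U in unif_family E. \<forall>f\<in>E. 0 < U f \<and> U f < 1"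
  unfolding unif_family_def
  by (intro AE_finite_allI AE_PiM_component prob_space_unif01 AE_unif01)

lemma measurable_pair_components:
  assumes "i \<in> I" "j \<in> I"
  shows "(\<lambda>\<omega>. (\<omega> i, \<omega> j)) \<in> measurable (PiM I (\<lambda>_. N)) (N \<Otimes>\<^sub>M N)"
  using assms by (intro measurable_Pair measurable_component_singleton)

lemma borel_measurable_PiM_pair_components:
  assumes "i \<in> I" "j \<in> I" and h: "(\<lambda>(x, y). h x y) \<in> borel_measurable (N \<Otimes>\<^sub>M N)"
  shows "(\<lambda>\<omega>. h (\<omega> i) (\<omega> j)) \<in> borel_measurable (PiM I (\<lambda>_. N))"
  using measurable_comp[OF measurable_pair_components[OF assms(1,2)] h] by (simp add: comp_def)

lemma integrable_PiM_pair_components: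
  fixes h :: "'a \<Rightarrow> 'a \<Rightarrow> real"
  assumes N: "prob_space N" and "i \<in> I" "j \<in> I"
    and h: "(\<lambda>(x, y). h x y) \<in> borel_measurable (N \<Otimes>\<^sub>M N)"
    and bound: "\<And>x y. \<bar>h x y\<bar> \<le> B"
  shows "integrable (PiM I (\<lambda>_. N)) (\<lambda>\<omega>. h (\<omega> i) (\<omega> j))"
proof -
  interpret P: prob_space "PiM I (\<lambda>_. N)" by (intro prob_space_PiM N)
  show ?thesis
    by (rule P.integrable_const_bound[where B = B])
      (use bound borel_measurable_PiM_pair_components[OF assms(2,3) h] in auto)
qed

lemma integral_PiM_pair_components:
  fixes h :: "'a \<Rightarrow> 'a \<Rightarrow> real"
  assumes N: "prob_space N"
    and I: "finite I" "i \<in> I" "j \<in> I" "i \<noteq> j"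
    and h: "(\<lambda>(x, y). h x y) \<in> borel_measurable (N \<Otimes>\<^sub>M N)"
    and bound: "\<And>x y. \<bar>h x y\<bar> \<le> B"
  shows "(\<integral>\<omega>. h (\<omega> i) (\<omega> j) \<partial>PiM I (\<lambda>_. N)) = (\<integral>x. (\<integral>y. h x y \<partial>N) \<partial>N)"
proof -
  interpret N: prob_space N by (rule N)
  interpret product_sigma_finite "\<lambda>_. N" ..
  define G where "G x = (\<integral>y. h x y \<partial>N)" for x
  have G: "G \<in> borel_measurable N"
    unfolding G_def using h by (intro N.borel_measurable_lebesgue_integral) (simp add: split_beta')
  have "integrable (PiM I (\<lambda>_. N)) (\<lambda>\<omega>. h (\<omega> i) (\<omega> j))"
    using I h bound by (intro integrable_PiM_pair_components N)
  moreover have "I = insert j (I - {j})" using I by auto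
  ultimately have "(\<integral>\<omega>. h (\<omega> i) (\<omega> j) \<partial>PiM I (\<lambda>_. N))
      = (\<integral>\<omega>. G (\<omega> i) \<partial>PiM (I - {j}) (\<lambda>_. N))"
    using product_integral_insert[of "I - {j}" j "\<lambda>\<omega>. h (\<omega> i) (\<omega> j)"] I
    by (simp add: G_def)
  also have "\<dots> = (\<integral>x. G x \<partial>distr (PiM (I - {j}) (\<lambda>_. N)) N (\<lambda>\<omega>. \<omega> i))"
    using I G by (subst integral_distr) (auto intro: measurable_component_singleton)
  also have "distr (PiM (I - {j}) (\<lambda>_. N)) N (\<lambda>\<omega>. \<omega> i) = N"
    using I by (intro distr_PiM_component N) auto
  finally show ?thesis by (simp add: G_def)
qed

lemma integral_PiM_components_le:
  fixes N :: "real measure"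
  assumes N: "prob_space N" and sets_N: "sets N = sets borel"
    and atomless: "\<And>c. measure N {c} = 0"
    and I: "finite I" "i \<in> I" "j \<in> I" "i \<noteq> j"
  shows "(\<integral>\<omega>. of_bool (\<omega> i \<le> \<omega> j) \<partial>PiM I (\<lambda>_. N)) = (1 / 2 :: real)"
proof -
  interpret N: prob_space N by (rule N)
  let ?P = "PiM I (\<lambda>_. N)"
  interpret P: prob_space ?P by (intro prob_space_PiM N)
  have le: "(\<lambda>(x, y). of_bool (x \<le> y) :: real) \<in> borel_measurable (N \<Otimes>\<^sub>M N)"
    unfolding measurable_pair_measure_borel_sets[OF sets_N] by measurable
  have eq: "(\<lambda>(x, y). of_bool (x = y) :: real) \<in> borel_measurable (N \<Otimes>\<^sub>M N)"
    unfolding measurable_pair_measure_borel_sets[OF sets_N] by measurable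
  have int: "integrable ?P (\<lambda>\<omega>. of_bool (\<omega> k \<le> \<omega> l) :: real)"
    "integrable ?P (\<lambda>\<omega>. of_bool (\<omega> k = \<omega> l) :: real)" if "k \<in> I" "l \<in> I" for k l
    using that le eq by (auto intro!: integrable_PiM_pair_components[where B = 1] N)
  define K where "K = (\<integral>x. (\<integral>y. of_bool (x \<le> y) \<partial>N) \<partial>N :: real)"
  have K: "(\<integral>\<omega>. of_bool (\<omega> k \<le> \<omega> l) \<partial>?P) = K" if "k \<in> I" "l \<in> I" "k \<noteq> l" for k l
    unfolding K_def using that I le by (intro integral_PiM_pair_components[where B = 1] N) auto
  have "(\<integral>y. of_bool (x = y) \<partial>N) = (0 :: real)" for x
  proof -
    have "(\<integral>y. of_bool (x = y) \<partial>N) = (\<integral>y. (indicator {x} y :: real) \<partial>N)"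
      by (intro Bochner_Integration.integral_cong) (auto split: split_indicator)
    then show ?thesis using sets_N atomless by (simp add: Int_absorb2)
  qed
  then have ties: "(\<integral>\<omega>. of_bool (\<omega> i = \<omega> j) \<partial>?P) = (0 :: real)"
    using I eq by (subst integral_PiM_pair_components[where B = 1]) (auto intro: N)
  have "K + K = (\<integral>\<omega>. of_bool (\<omega> i \<le> \<omega> j) + of_bool (\<omega> j \<le> \<omega> i) \<partial>?P)"
    using I by (simp add: K int)
  also have "\<dots> = (\<integral>\<omega>. 1 + of_bool (\<omega> i = \<omega> j) \<partial>?P)"
    by (intro Bochner_Integration.integral_cong) auto
  also have "\<dots> = 1"
    using I ties int by (subst Bochner_Integration.integral_add) (auto simp: P.prob_space)
  finally show ?thesis using I K by simp
qed

lemma borel_measurable_unif_family_shifted_le: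
  assumes "e \<in> E" "f \<in> E"
  shows "(\<lambda>U. of_bool (c + U e \<le> d + U f) :: real) \<in> borel_measurable (unif_family E)"
  unfolding unif_family_def
  by (rule borel_measurable_PiM_pair_components[OF assms], unfold measurable_pair_unif01) measurable

lemma integral_unif_family_shifted_le:
  fixes a b :: int
  assumes E: "finite E" "e \<in> E" "f \<in> E" "e \<noteq> f"
  shows "(\<integral>U. of_bool (of_int a + U e \<le> of_int b + U f) \<partial>unif_family E)
    = of_bool (a < b) + of_bool (a = b) / (2 :: real)"
proof -
  interpret P: prob_space "unif_family E" by (rule prob_space_unif_family)
  note meas = borel_measurable_unif_family_shifted_le[OF E(2,3), of "of_int a" "of_int b"]
  have "AE U in unif_family E. of_bool (of_int a + U e \<le> of_int b + U f) = (of_bool (a < b) :: real)"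
    if "a \<noteq> b"
    using AE_unif_family[OF E(1)]
  proof eventually_elim
    case (elim U)
    have "0 < U e" "U e < 1" "0 < U f" "U f < 1" using elim E by auto
    moreover have "a < b \<Longrightarrow> of_int a + 1 \<le> (of_int b :: real)"
      and "\<not> a < b \<Longrightarrow> of_int b + 1 \<le> (of_int a :: real)"
      using that by linarith+
    ultimately show ?case by (cases "a < b") auto
  qed
  moreover have "(\<integral>U. of_bool (U e \<le> U f) \<partial>unif_family E) = (1 / 2 :: real)"
    unfolding unif_family_def using E measure_unif01_singleton
    by (intro integral_PiM_components_le prob_space_unif01) auto
  ultimately show ?thesis
    by (cases "a = b") (auto simp: integral_cong_AE[OF meas, where g = "\<lambda>_. of_bool (a < b)"] P.prob_space)
qed

lemma rank_eq_sum: "finite A \<Longrightarrow> rank A x j = (\<Sum>i\<in>A. of_bool (x j \<le> x i))"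
  unfolding rank_def by (simp add: Int_def conj_commute)

lemma avg_rank_eq_sum:
  "finite A \<Longrightarrow> avg_rank A x j = (\<Sum>i\<in>A. of_bool (x j < x i) + of_bool (x i = x j) / 2) + 1 / 2"
  unfolding avg_rank_def
  by (simp add: sum.distrib sum_divide_distrib[symmetric] Int_def conj_commute add_divide_distrib)

lemma abs_rank_le: "finite A \<Longrightarrow> \<bar>rank A x j\<bar> \<le> real (card A)"
  unfolding rank_def by (simp add: card_mono)

lemma borel_measurable_rank_unif_family:
  assumes "finite E" "e \<in> E"
  shows "(\<lambda>U. rank E (\<lambda>f. x f + U f) e) \<in> borel_measurable (unif_family E)"
  unfolding rank_eq_sum[OF assms(1)]
  using assms by (intro borel_measurable_sum borel_measurable_unif_family_shifted_le)

lemma integral_rank_unif_family: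
  fixes n :: "'e \<Rightarrow> int"
  assumes E: "finite E" "e \<in> E"
  shows "(\<integral>U. rank E (\<lambda>f. of_int (n f) + U f) e \<partial>unif_family E) = avg_rank E (\<lambda>f. of_int (n f)) e"
proof -
  interpret P: prob_space "unif_family E" by (rule prob_space_unif_family)
  let ?ind = "\<lambda>f U. of_bool (of_int (n e) + U e \<le> of_int (n f) + U f) :: real"
  have "integrable (unif_family E) (?ind f)" if "f \<in> E" for f
    using E that by (intro P.integrable_const_bound[where B = 1] borel_measurable_unif_family_shifted_le) auto
  then have "(\<integral>U. rank E (\<lambda>f. of_int (n f) + U f) e \<partial>unif_family E) = (\<Sum>f\<in>E. \<integral>U. ?ind f U \<partial>unif_family E)"
    unfolding rank_eq_sum[OF E(1)] by (rule Bochner_Integration.integral_sum)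
  also have "\<dots> = 1 + (\<Sum>f\<in>E - {e}. of_bool (n e < n f) + of_bool (n f = n e) / 2)"
    using E by (simp add: sum.remove integral_unif_family_shifted_le eq_commute P.prob_space)
  also have "\<dots> = avg_rank E (\<lambda>f. of_int (n f)) e"
    using E by (simp add: avg_rank_eq_sum sum.remove)
  finally show ?thesis .
qed

lemma integral_pair_measure_mult:
  fixes g :: "'a \<Rightarrow> real" and h :: "'b \<Rightarrow> real"
  assumes A: "prob_space A" and B: "prob_space B"
    and g: "g \<in> borel_measurable A" and h: "h \<in> borel_measurable B"
    and bounds: "\<And>x. \<bar>g x\<bar> \<le> C" "\<And>y. \<bar>h y\<bar> \<le> D"
  shows "(\<integral>z. g (fst z) * h (snd z) \<partial>(A \<Otimes>\<^sub>M B)) = integral\<^sup>L A g * integral\<^sup>L B h"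
proof -
  interpret A: prob_space A by (rule A)
  interpret B: prob_space B by (rule B)
  interpret AB: pair_sigma_finite A B ..
  interpret AB: prob_space "A \<Otimes>\<^sub>M B" by (intro prob_space_pair A B)
  have "integrable (A \<Otimes>\<^sub>M B) (\<lambda>z. g (fst z) * h (snd z))"
  proof (rule AB.integrable_const_bound[where B = "C * D"])
    show "AE z in A \<Otimes>\<^sub>M B. norm (g (fst z) * h (snd z)) \<le> C * D"
      using bounds by (auto simp: abs_mult intro!: mult_mono order_trans[OF abs_ge_zero bounds(1)])
  qed (use g h in measurable)
  then show ?thesis
    by (simp add: AB.integral_fst'[symmetric])
qed

theorem lemma4p4:
  fixes V :: "'v set" and E :: "'e set" and src tgt :: "'e \<Rightarrow> 'v"
    and e :: 'e and \<alpha> \<beta> :: dir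
  assumes "finite V" and "finite E"
    and "\<forall>f\<in>E. src f \<in> V \<and> tgt f \<in> V"
    and "e \<in> E"
  defines "M \<equiv> unif_family E \<Otimes>\<^sub>M unif_family E"
    and "Ra \<equiv> \<lambda>(U, W). rank E (\<lambda>f. real (deg E src tgt \<alpha> (src f)) + U f) e"
    and "Rb \<equiv> \<lambda>(U, W). rank E (\<lambda>f. real (deg E src tgt \<beta> (tgt f)) + W f) e"
    and "Ra_bar \<equiv> avg_rank E (\<lambda>f. real (deg E src tgt \<alpha> (src f))) e"
    and "Rb_bar \<equiv> avg_rank E (\<lambda>f. real (deg E src tgt \<beta> (tgt f))) e"
  shows "(\<integral>\<omega>. Ra \<omega> \<partial>M) = Ra_bar
    \<and> (\<integral>\<omega>. Rb \<omega> \<partial>M) = Rb_bar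
    \<and> (\<integral>\<omega>. Ra \<omega> * Rb \<omega> \<partial>M) = Ra_bar * Rb_bar"
proof -
  define gA where "gA U = rank E (\<lambda>f. real (deg E src tgt \<alpha> (src f)) + U f) e" for U
  define gB where "gB W = rank E (\<lambda>f. real (deg E src tgt \<beta> (tgt f)) + W f) e" for W
  have E: "finite E" "e \<in> E" using assms by auto
  have meas: "gA \<in> borel_measurable (unif_family E)" "gB \<in> borel_measurable (unif_family E)"
    unfolding gA_def gB_def using E by (auto intro: borel_measurable_rank_unif_family)
  have bounds: "\<bar>gA U\<bar> \<le> real (card E)" "\<bar>gB U\<bar> \<le> real (card E)" for U
    unfolding gA_def gB_def using E by (auto intro: abs_rank_le)
  have exp: "integral\<^sup>L (unif_family E) gA = Ra_bar" "integral\<^sup>L (unif_family E) gB = Rb_bar"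
    unfolding gA_def gB_def Ra_bar_def Rb_bar_def
    using integral_rank_unif_family[OF E, of "\<lambda>f. int (deg E src tgt \<alpha> (src f))"]
      integral_rank_unif_family[OF E, of "\<lambda>f. int (deg E src tgt \<beta> (tgt f))"] by simp_all
  interpret P: prob_space "unif_family E" by (rule prob_space_unif_family)
  note mult = integral_pair_measure_mult[OF P.prob_space_axioms P.prob_space_axioms]
  have R: "Ra = (\<lambda>z. gA (fst z))" "Rb = (\<lambda>z. gB (snd z))"
    unfolding Ra_def Rb_def gA_def gB_def by auto
  show ?thesis
    using mult[OF meas(1) borel_measurable_const bounds(1), of 1 1]
      mult[OF borel_measurable_const meas(2) _ bounds(2), of 1 1] mult[OF meas bounds]
    unfolding M_def R by (simp add: exp P.prob_space)
qed

end
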